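(* Let $A$ be an $n\times n$ real matrix with spectrum $\{\lambda_1,\dots,\lambda_n\}$ (counting algebraic multiplicities). Suppose $\lambda_1$ is real with a real eigenvector $v$ having no zero components. Let $B=[b_{ij}]=S^{-1}AS$ with $S=\mathrm{diag}(v)$. (1) If $n$ is even, let $F=[b_{ij}-\beta_j]$, where $\beta_j$ is the $(n/2)$-th largest element among $b_{1j},\dots,b_{j-1,j},b_{j+1,j},\dots,b_{nj}$. Then $\lambda_i\in\Gamma(F)\cap\Gamma(F^T)$ for $i=2,\dots,n$. (2) If $n$ is odd with $n\ge 3$, let $\beta_j$ and $\gamma_j$ be, respectively, the negatives of the $\frac{n-1}{2}$-th and the $\frac{n+1}{2}$-th largest numbers among $b_{1j},\dots,b_{j-1,j},b_{j+1,j},\dots,b_{nj}$, and let $F=[b_{ij}+\beta_j]$, $G=[b_{ij}+\gamma_j]$. Then $\lambda_i\in\Gamma(F)\cap\Gamma(F^T)\cap\Gamma(G)\cap\Gamma(G^T)$ for $i=2,\dots,n$.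
   Context: For an $n\times n$ complex matrix $M=[m_{ij}]$, its Ostrowski–Brauer set is $$\Gamma(M)=\bigcup_{1\le i<j\le n}\Big\{y\in\mathbb{C}: |y-m_{ii}|\,|y-m_{jj}|\le \Big(\sum_{k\ne i}|m_{ik}|\Big)\Big(\sum_{k\ne j}|m_{jk}|\Big)\Big\}.$$ "The $t$-th largest element" of a list refers to the $t$-th entry of the list sorted in non-increasing order (with repetitions). *)

theory Defs
  imports "Jordan_Normal_Form.Char_Poly"
begin

definition row_dev :: "complex mat \<Rightarrow> nat \<Rightarrow> real" where
  "row_dev M i = (\<Sum>k\<in>{0..<dim_row M} - {i}. cmod (M $$ (i,k)))"

definition ob_set :: "complex mat \<Rightarrow> complex set" where
  "ob_set M = (\<Union>i\<in>{0..<dim_row M}. \<Union>j\<in>{i<..<dim_row M}.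
      {y. cmod (y - M $$ (i,i)) * cmod (y - M $$ (j,j)) \<le> row_dev M i * row_dev M j})"

abbreviation cmat :: "real mat \<Rightarrow> complex mat" where
  "cmat M \<equiv> map_mat complex_of_real M"

definition kth_largest :: "nat \<Rightarrow> real list \<Rightarrow> real" where
  "kth_largest t xs = rev (sort xs) ! (t - 1)"

definition col_off :: "real mat \<Rightarrow> nat \<Rightarrow> real list" where
  "col_off B j = [B $$ (i,j). i \<leftarrow> [0..<dim_row B], i \<noteq> j]"

definition is_spectrum_list :: "real mat \<Rightarrow> complex list \<Rightarrow> bool" where
  "is_spectrum_list A ls \<longleftrightarrow> char_poly (cmat A) = (\<Prod>a\<leftarrow>ls. [:- a, 1:])"

end

theory Submission
  imports Defs
begin

text \<open>Since \<open>v\<close> is an eigenvector for \<open>\<lambda>\<^sub>1\<close>, every row of \<open>B = S\<^sup>-\<^sup>1 A S\<close> sums to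
  \<open>\<lambda>\<^sub>1\<close>, i.e. the all-ones vector is an eigenvector of \<open>B\<close>. Subtracting an arbitrary constant
  \<open>c\<^sub>j\<close> from each column \<open>j\<close> keeps the row sums constant (now \<open>\<lambda>\<^sub>1 - \<Sum>c\<^sub>j\<close>) and does not
  change the deflated \<open>(n-1)\<times>(n-1)\<close> matrix, so the characteristic polynomial only changes in
  the linear factor of \<open>\<lambda>\<^sub>1\<close>: \<open>\<lambda>\<^sub>2, \<dots>, \<lambda>\<^sub>n\<close> stay eigenvalues of \<open>F\<close> and of \<open>F\<^sup>T\<close>, and
  Brauer's theorem puts them into the Ostrowski--Brauer sets.\<close>

lemma eigenvector_row_estimate:
  fixes M :: "complex mat" and x :: "complex vec"
  assumes M: "M \<in> carrier_mat n n" and x: "x \<in> carrier_vec n"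
    and eig: "M *\<^sub>v x = \<mu> \<cdot>\<^sub>v x" and i: "i < n"
    and bound: "\<And>k. k < n \<Longrightarrow> k \<noteq> i \<Longrightarrow> cmod (x $ k) \<le> b"
  shows "cmod (\<mu> - M $$ (i,i)) * cmod (x $ i) \<le> row_dev M i * b"
proof -
  have "\<mu> * x $ i = (\<Sum>k\<in>{0..<n}. M $$ (i,k) * x $ k)"
    using arg_cong[OF eig, of "\<lambda>y. y $ i"] M x i by (simp add: scalar_prod_def)
  also have "\<dots> = M $$ (i,i) * x $ i + (\<Sum>k\<in>{0..<n}-{i}. M $$ (i,k) * x $ k)"
    using i by (simp add: sum.remove[of "{0..<n}" i])
  finally have "(\<mu> - M $$ (i,i)) * x $ i = (\<Sum>k\<in>{0..<n}-{i}. M $$ (i,k) * x $ k)"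
    by (simp add: algebra_simps)
  hence "cmod (\<mu> - M $$ (i,i)) * cmod (x $ i) = cmod (\<Sum>k\<in>{0..<n}-{i}. M $$ (i,k) * x $ k)"
    by (metis norm_mult)
  also have "\<dots> \<le> (\<Sum>k\<in>{0..<n}-{i}. cmod (M $$ (i,k)) * cmod (x $ k))"
    by (rule order_trans[OF norm_sum]) (simp add: norm_mult)
  also have "\<dots> \<le> (\<Sum>k\<in>{0..<n}-{i}. cmod (M $$ (i,k)) * b)"
    by (intro sum_mono mult_left_mono) (auto intro: bound)
  also have "\<dots> = row_dev M i * b"
    using M by (simp add: row_dev_def sum_distrib_right)
  finally show ?thesis .
qed

lemma finite_obtains_max:
  fixes f :: "'a \<Rightarrow> 'b::linorder"
  assumes "finite K" and "K \<noteq> {}"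
  obtains p where "p \<in> K" and "\<And>k. k \<in> K \<Longrightarrow> f k \<le> f p"
proof -
  have "Max (f ` K) \<in> f ` K"
    using assms by (intro Max_in) auto
  then obtain p where "p \<in> K" and "f p = Max (f ` K)"
    by auto
  with assms show ?thesis by (intro that) auto
qed

text \<open>With \<open>p\<close> and \<open>q\<close> the positions of the two largest entries of an
  eigenvector in modulus, multiplying the row estimates for \<open>p\<close> and \<open>q\<close> and cancelling
  \<open>\<bar>x\<^sub>p\<bar> \<bar>x\<^sub>q\<bar>\<close> gives the Cassini oval of the pair.\<close>
lemma eigenvalue_in_ob_set:
  fixes M :: "complex mat"
  assumes M: "M \<in> carrier_mat n n" and n: "2 \<le> n" and ev: "eigenvalue M \<mu>"
  shows "\<mu> \<in> ob_set M"
proof -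
  obtain x where x: "x \<in> carrier_vec n" and x0: "x \<noteq> 0\<^sub>v n" and Mx: "M *\<^sub>v x = \<mu> \<cdot>\<^sub>v x"
    using ev M unfolding eigenvalue_def eigenvector_def by auto
  define f where "f k = cmod (x $ k)" for k
  obtain p where p: "p < n" and p_max: "\<And>k. k < n \<Longrightarrow> f k \<le> f p"
    using finite_obtains_max[of "{0..<n}" f] n by auto
  have "(if p = 0 then 1 else 0) \<in> {0..<n} - {p}"
    using n by auto
  then obtain q where "q \<in> {0..<n} - {p}" and q_max: "\<And>k. k \<in> {0..<n} - {p} \<Longrightarrow> f k \<le> f q"
    by (metis empty_iff finite_obtains_max finite_Diff finite_atLeastLessThan)
  hence q: "q < n" "q \<noteq> p"
    by auto
  have "f p > 0"
  proof (rule ccontr)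
    assume "\<not> f p > 0"
    hence "x $ k = 0" if "k < n" for k
      using p_max[OF that] unfolding f_def by (metis norm_ge_zero norm_le_zero_iff order.trans not_less)
    hence "x = 0\<^sub>v n" using x by (intro eq_vecI) auto
    with x0 show False ..
  qed
  have est_p: "cmod (\<mu> - M $$ (p,p)) * f p \<le> row_dev M p * f q"
    unfolding f_def by (rule eigenvector_row_estimate[OF M x Mx p]) (use q_max f_def in auto)
  have est_q: "cmod (\<mu> - M $$ (q,q)) * f q \<le> row_dev M q * f p"
    unfolding f_def by (rule eigenvector_row_estimate[OF M x Mx q(1)]) (use p_max f_def in auto)
  have dev: "row_dev M p \<ge> 0" "row_dev M q \<ge> 0"
    unfolding row_dev_def by (auto intro: sum_nonneg)
  have oval: "cmod (\<mu> - M $$ (p,p)) * cmod (\<mu> - M $$ (q,q)) \<le> row_dev M p * row_dev M q"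
  proof (cases "f q = 0")
    case True
    with est_p \<open>f p > 0\<close> have "cmod (\<mu> - M $$ (p,p)) = 0"
      by (simp add: mult_le_0_iff)
    thus ?thesis using dev by simp
  next
    case False
    hence "f q > 0" by (simp add: f_def)
    have "(cmod (\<mu> - M $$ (p,p)) * f p) * (cmod (\<mu> - M $$ (q,q)) * f q)
        \<le> (row_dev M p * f q) * (row_dev M q * f p)"
      by (rule mult_mono[OF est_p est_q]) (use dev \<open>f p > 0\<close> \<open>f q > 0\<close> in auto)
    hence "(cmod (\<mu> - M $$ (p,p)) * cmod (\<mu> - M $$ (q,q))) * (f p * f q)
        \<le> (row_dev M p * row_dev M q) * (f p * f q)"
      by (simp add: algebra_simps)
    thus ?thesis using \<open>f p > 0\<close> \<open>f q > 0\<close> by simp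
  qed
  show ?thesis
  proof (cases "p < q")
    case True
    then show ?thesis unfolding ob_set_def using M oval q
      by (intro UN_I[where a=p] UN_I[where a=q]) auto
  next
    case False
    with q have "q < p" by auto
    then show ?thesis unfolding ob_set_def using M oval p
      by (intro UN_I[where a=q] UN_I[where a=p]) (auto simp: mult.commute)
  qed
qed

lemma eigenvalue_transpose_mat_iff:
  fixes A :: "'a::field mat"
  assumes "A \<in> carrier_mat n n"
  shows "eigenvalue (transpose_mat A) k \<longleftrightarrow> eigenvalue A k"
  using assms by (simp add: eigenvalue_root_char_poly[of _ n])

definition deflation :: "'a::comm_ring_1 mat \<Rightarrow> 'a mat" where
  "deflation M = mat (dim_row M - 1) (dim_row M - 1)
     (\<lambda>(i,j). M $$ (Suc i, Suc j) - M $$ (0, Suc j))"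

text \<open>The change of basis \<open>P\<close>, whose first column is the eigenvector \<open>(1,\<dots>,1)\<close> for \<open>lam\<close>,
  makes \<open>M\<close> block upper triangular with the deflation as lower right block.\<close>
lemma char_poly_const_row_sums:
  fixes M :: "'a::comm_ring_1 mat"
  assumes M: "M \<in> carrier_mat (Suc m) (Suc m)"
    and row_sums: "\<And>i. i < Suc m \<Longrightarrow> (\<Sum>j\<in>{0..<Suc m}. M $$ (i,j)) = lam"
  shows "char_poly M = [:-lam, 1:] * char_poly (deflation M)"
proof -
  define D where "D = deflation M"
  define T where "T = four_block_mat (mat 1 1 (\<lambda>_. lam)) (mat 1 m (\<lambda>(_,j). M $$ (0, Suc j))) (0\<^sub>m m 1) D"
  define P :: "'a mat" where "P = mat (Suc m) (Suc m) (\<lambda>(k,j). if j = 0 \<or> k = j then 1 else 0)"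
  define Q :: "'a mat" where "Q = mat (Suc m) (Suc m) (\<lambda>(k,j). if k = j then 1 else if j = 0 then -1 else 0)"
  have D: "D \<in> carrier_mat m m" using M by (simp add: D_def deflation_def)
  have T: "T \<in> carrier_mat (Suc m) (Suc m)" using D unfolding T_def by auto
  have P: "P \<in> carrier_mat (Suc m) (Suc m)" and Q: "Q \<in> carrier_mat (Suc m) (Suc m)"
    by (simp_all add: P_def Q_def)
  note entry_simps = scalar_prod_def sum.atLeast0_lessThan_Suc_shift sum_negf sum.delta sum.delta'
    if_distrib[of "\<lambda>x. x * _"] if_distrib[of "\<lambda>x. _ * x"] gr0_conv_Suc
  have PQ: "P * Q = 1\<^sub>m (Suc m)" and QP: "Q * P = 1\<^sub>m (Suc m)"
    by (auto intro!: eq_matI simp: P_def Q_def entry_simps split: nat.split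
        simp del: sum.op_ivl_Suc cong: if_cong)
  have "M * P = P * T"
  proof (rule eq_matI)
    fix i j assume "i < dim_row (P * T)" and "j < dim_col (P * T)"
    hence i: "i < Suc m" and j: "j < Suc m" using P T by auto
    show "(M * P) $$ (i, j) = (P * T) $$ (i, j)"
    proof (cases j)
      case 0
      have "(M * P) $$ (i, j) = lam"
        using i j M 0 row_sums[OF i] by (simp add: P_def scalar_prod_def)
      with i j 0 M show ?thesis unfolding P_def T_def D_def deflation_def
        by (cases i) (auto simp: entry_simps simp del: sum.op_ivl_Suc cong: if_cong)
    next
      case (Suc j')
      with i j M show ?thesis unfolding P_def T_def D_def deflation_def
        by (cases i) (auto simp: entry_simps simp del: sum.op_ivl_Suc cong: if_cong)
    qed
  qed (use M P T in auto)
  hence "M = P * T * Q"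
    using M P Q PQ by (metis assoc_mult_mat right_mult_one_mat)
  hence "similar_mat M T"
    by (rule similar_matI[OF _ PQ QP, rotated]) (use M P Q T in auto)
  hence "char_poly M = char_poly T"
    by (rule char_poly_similar)
  also have "\<dots> = char_poly (mat 1 1 (\<lambda>_. lam)) * char_poly D"
    unfolding T_def using D by (intro char_poly_four_block_zeros_col) auto
  also have "char_poly (mat 1 1 (\<lambda>_. lam)) = [:-lam, 1:]"
    by (subst char_poly_upper_triangular[of _ 1]) (auto simp: upper_triangular_def diag_mat_def)
  finally show ?thesis unfolding D_def .
qed

lemma deflation_column_shift:
  assumes "M \<in> carrier_mat n n"
  shows "deflation (mat n n (\<lambda>(i,j). M $$ (i,j) - c j)) = deflation M"
  using assms by (auto intro!: eq_matI simp: deflation_def)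

lemma eigenvalue_column_shift:
  fixes M :: "'a::field mat"
  assumes M: "M \<in> carrier_mat n n"
    and row_sums: "\<And>i. i < n \<Longrightarrow> (\<Sum>j\<in>{0..<n}. M $$ (i,j)) = lam"
    and char_poly_M: "char_poly M = (\<Prod>a\<leftarrow>lam # ls. [:-a, 1:])"
    and a: "a \<in> set ls"
  shows "eigenvalue (mat n n (\<lambda>(i,j). M $$ (i,j) - c j)) a"
proof -
  let ?F = "mat n n (\<lambda>(i,j). M $$ (i,j) - c j)"
  have "eigenvalue M lam"
    using char_poly_M by (simp add: eigenvalue_root_char_poly[OF M])
  then obtain m where n: "n = Suc m"
    using eigenvalue_imp_nonzero_dim[OF M] gr0_conv_Suc by blast
  have "[:-lam, 1:] * char_poly (deflation M) = [:-lam, 1:] * (\<Prod>a\<leftarrow>ls. [:-a, 1:])"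
    using char_poly_const_row_sums[of M m lam] M row_sums char_poly_M n by simp
  hence char_poly_deflation: "char_poly (deflation M) = (\<Prod>a\<leftarrow>ls. [:-a, 1:])"
    by (rule mult_left_cancel[THEN iffD1, rotated]) simp
  have "char_poly ?F = [:-(lam - sum c {0..<n}), 1:] * char_poly (deflation ?F)"
  proof (rule char_poly_const_row_sums)
    show "?F \<in> carrier_mat (Suc m) (Suc m)"
      using n by simp
    fix i assume "i < Suc m"
    then show "(\<Sum>j\<in>{0..<Suc m}. ?F $$ (i,j)) = lam - sum c {0..<n}"
      using row_sums[of i] n by (simp add: sum_subtractf del: sum.op_ivl_Suc)
  qed
  also have "deflation ?F = deflation M"
    by (rule deflation_column_shift[OF M])
  finally have "char_poly ?F = [:-(lam - sum c {0..<n}), 1:] * (\<Prod>b\<leftarrow>ls. [:-b, 1:])"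
    unfolding char_poly_deflation .
  moreover have "poly (\<Prod>b\<leftarrow>ls. [:-b, 1:]) a = 0"
    using a by (simp add: poly_prod_list prod_list_zero_iff)
  ultimately have "poly (char_poly ?F) a = 0"
    by simp
  thus ?thesis
    by (simp add: eigenvalue_root_char_poly[of _ n])
qed

lemma index_mat_diag_mult_mat_diag:
  fixes A :: "'a::comm_ring_1 mat"
  assumes "A \<in> carrier_mat n n" and "i < n" and "j < n"
  shows "(mat_diag n d * A * mat_diag n e) $$ (i,j) = d i * A $$ (i,j) * e j"
  using assms by (simp add: mat_diag_mult_left mat_diag_mult_right[of _ n n])

lemma similar_mat_diag_scaling:
  fixes A :: "'a::field mat"
  assumes A: "A \<in> carrier_mat n n" and nz: "\<And>i. i < n \<Longrightarrow> d i \<noteq> 0"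
  shows "similar_mat A (mat_diag n (\<lambda>i. 1 / d i) * A * mat_diag n d)"
proof -
  define D D' where "D = mat_diag n d" and "D' = mat_diag n (\<lambda>i. 1 / d i)"
  have D: "D \<in> carrier_mat n n" "D' \<in> carrier_mat n n"
    by (simp_all add: D_def D'_def)
  have inverse: "D * D' = 1\<^sub>m n" "D' * D = 1\<^sub>m n"
    unfolding D_def D'_def mat_diag_diag using nz by (auto intro!: eq_matI simp: mat_diag_def)
  have "D * (D' * A * D) * D' = (D * D') * A * (D * D')"
    using A D by (simp add: assoc_mult_mat[of _ n n _ n _ n])
  also have "\<dots> = A"
    using A by (simp add: inverse)
  finally show ?thesis
    using A D unfolding D_def[symmetric] D'_def[symmetric]
    by (intro similar_matI[OF _ inverse]) auto
qed

lemma row_sum_diag_scaling: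
  fixes A :: "'a::field mat"
  assumes A: "A \<in> carrier_mat n n" and v: "dim_vec v = n"
    and eig: "A *\<^sub>v v = lam \<cdot>\<^sub>v v" and i: "i < n" and nz: "v $ i \<noteq> 0"
  shows "(\<Sum>j\<in>{0..<n}. (mat_diag n (\<lambda>i. 1 / v $ i) * A * mat_diag n (\<lambda>i. v $ i)) $$ (i,j)) = lam"
proof -
  have "(\<Sum>j\<in>{0..<n}. A $$ (i,j) * v $ j) = lam * v $ i"
    using arg_cong[OF eig, of "\<lambda>y. y $ i"] A v i by (simp add: scalar_prod_def)
  then show ?thesis
    using A i nz by (simp add: index_mat_diag_mult_mat_diag sum_divide_distrib[symmetric])
qed

lemma eigenvalue_column_shift_diag_scaling:
  fixes A :: "real mat" and c :: "nat \<Rightarrow> real"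
  assumes A: "A \<in> carrier_mat n n"
    and spec: "is_spectrum_list A lams" and len: "length lams = n"
    and lam1: "lams ! 0 = complex_of_real lam1"
    and v: "dim_vec v = n" and eig: "A *\<^sub>v v = lam1 \<cdot>\<^sub>v v"
    and nz: "\<forall>i<n. v $ i \<noteq> 0"
    and B: "B = mat_diag n (\<lambda>i. 1 / v $ i) * A * mat_diag n (\<lambda>i. v $ i)"
    and i: "i \<in> {1..<n}"
  shows "eigenvalue (cmat (mat n n (\<lambda>(i,j). B $$ (i,j) - c j))) (lams ! i)"
proof -
  have B_carrier: "B \<in> carrier_mat n n"
    unfolding B using A by (meson mult_carrier_mat mat_diag_dim)
  have "char_poly (cmat B) = char_poly (cmat A)"
    using similar_mat_diag_scaling[OF A, of "\<lambda>i. v $ i"] nz B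
      of_real_hom.char_poly_hom[OF A] of_real_hom.char_poly_hom[OF B_carrier]
    by (metis char_poly_similar)
  also have "\<dots> = (\<Prod>a\<leftarrow>complex_of_real lam1 # tl lams. [:-a, 1:])"
    using spec len i lam1 unfolding is_spectrum_list_def by (cases lams) auto
  finally have char_poly_B: "char_poly (cmat B) = \<dots>" .
  have row_sums: "(\<Sum>j\<in>{0..<n}. cmat B $$ (k,j)) = complex_of_real lam1" if "k < n" for k
    using row_sum_diag_scaling[OF A v eig that, folded B] nz that B_carrier
    by (simp flip: of_real_sum)
  have "lams ! i \<in> set (tl lams)"
    using i len by (cases lams) auto
  moreover have "cmat (mat n n (\<lambda>(i,j). B $$ (i,j) - c j))
      = mat n n (\<lambda>(i,j). cmat B $$ (i,j) - complex_of_real (c j))"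
    using B_carrier by (auto intro!: eq_matI)
  ultimately show ?thesis
    using eigenvalue_column_shift[OF _ row_sums char_poly_B] B_carrier by simp
qed

lemma column_shift_diag_scaling_in_ob_sets:
  fixes A :: "real mat" and c :: "nat \<Rightarrow> real"
  assumes A: "A \<in> carrier_mat n n"
    and spec: "is_spectrum_list A lams" and len: "length lams = n"
    and lam1: "lams ! 0 = complex_of_real lam1"
    and v: "dim_vec v = n" and eig: "A *\<^sub>v v = lam1 \<cdot>\<^sub>v v"
    and nz: "\<forall>i<n. v $ i \<noteq> 0"
    and B: "B = mat_diag n (\<lambda>i. 1 / v $ i) * A * mat_diag n (\<lambda>i. v $ i)"
    and i: "i \<in> {1..<n}"
  defines "F \<equiv> mat n n (\<lambda>(i,j). B $$ (i,j) - c j)"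
  shows "lams ! i \<in> ob_set (cmat F) \<inter> ob_set (cmat (transpose_mat F))"
proof -
  have F: "cmat F \<in> carrier_mat n n" and n: "2 \<le> n"
    using i by (auto simp: F_def)
  have "eigenvalue (cmat F) (lams ! i)"
    unfolding F_def by (rule eigenvalue_column_shift_diag_scaling[OF assms(1-9)])
  moreover from this have "eigenvalue (transpose_mat (cmat F)) (lams ! i)"
    by (simp add: eigenvalue_transpose_mat_iff[OF F])
  ultimately show ?thesis
    using F n by (simp add: map_mat_transpose[symmetric] eigenvalue_in_ob_set)
qed

theorem theorem7:
  fixes A :: "real mat" and n :: nat and v :: "real vec" and lam1 :: real
    and lams :: "complex list"
  assumes A: "A \<in> carrier_mat n n"
    and npos: "0 < n"
    and spec: "is_spectrum_list A lams" and len: "length lams = n"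
    and l1: "lams ! 0 = complex_of_real lam1"
    and v: "dim_vec v = n" and eig: "A *\<^sub>v v = lam1 \<cdot>\<^sub>v v"
    and nz: "\<forall>i<n. v $ i \<noteq> 0"
  defines "S \<equiv> mat_diag n (\<lambda>i. v $ i)"
    and "Sinv \<equiv> mat_diag n (\<lambda>i. 1 / v $ i)"
  defines "B \<equiv> Sinv * A * S"
  shows
    "(even n \<longrightarrow>
       (let F = mat n n (\<lambda>(i,j). B $$ (i,j) - kth_largest (n div 2) (col_off B j))
        in \<forall>i\<in>{1..<n}. lams ! i \<in> ob_set (cmat F) \<inter> ob_set (cmat (transpose_mat F))))
     \<and> (odd n \<and> 3 \<le> n \<longrightarrow>
       (let F = mat n n (\<lambda>(i,j). B $$ (i,j) + (- kth_largest ((n - 1) div 2) (col_off B j)));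
            G = mat n n (\<lambda>(i,j). B $$ (i,j) + (- kth_largest ((n + 1) div 2) (col_off B j)))
        in \<forall>i\<in>{1..<n}. lams ! i \<in> ob_set (cmat F) \<inter> ob_set (cmat (transpose_mat F))
              \<inter> ob_set (cmat G) \<inter> ob_set (cmat (transpose_mat G))))"
proof -
  have B: "B = mat_diag n (\<lambda>i. 1 / v $ i) * A * mat_diag n (\<lambda>i. v $ i)"
    unfolding B_def S_def Sinv_def ..
  note in_ob_sets = column_shift_diag_scaling_in_ob_sets[OF A spec len l1 v eig nz B]
  show ?thesis
    unfolding Let_def add_uminus_conv_diff
    using in_ob_sets[of _ "\<lambda>j. kth_largest (n div 2) (col_off B j)"]
      in_ob_sets[of _ "\<lambda>j. kth_largest ((n - 1) div 2) (col_off B j)"]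
      in_ob_sets[of _ "\<lambda>j. kth_largest ((n + 1) div 2) (col_off B j)"]
    by blast
qed

end
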